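(* Let $L\ge 3$, $W=(\mathbb{Z}/2\mathbb{Z})^{*L}$, $q\in[\frac{1}{L-1},1]$, $l\in\mathbb{N}$ with $l\ge 2$, and let $\beta,\beta'\in\mathbb{C}_q^1[W]\ominus S_1$, $\gamma\in\mathbb{C}_q^l[W]\ominus S_l$, $\gamma'\in\mathbb{C}_q^l[W]$. Then for all $m,n,m',n'\in\mathbb{N}_0$, $$\langle\beta_{m,n},\beta'_{m',n'}\rangle=\delta_{m+n,m'+n'}(L-1)^{m+n-|n-n'|}(-1)^{|n-n'|}\langle\beta,\beta'\rangle,$$ $$\langle\gamma_{m,n},\gamma'_{m',n'}\rangle=\delta_{m,m'}\delta_{n,n'}(L-1)^{m+n}\langle\gamma,\gamma'\rangle,$$ where $\langle\cdot,\cdot\rangle$ is the inner product of $\ell^2(W)$.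
   Context: $W=(\mathbb{Z}/2\mathbb{Z})^{*L}$ is the free product of $L$ copies of $\mathbb{Z}/2\mathbb{Z}$ with canonical generating set $S$ and word length $|\cdot|$. Put $p=\frac{q-1}{q^2}$. $\mathbb{C}_q[W]$ is the $*$-algebra with linear basis $\{T_w\}_{w\in W}$, $T_e=1$, $T_w^*=T_{w^{-1}}$, and $T_sT_w=T_{sw}$ if $|sw|>|w|$, $T_sT_w=T_{sw}+pT_w$ if $|sw|<|w|$ ($s\in S,w\in W$). Elements of $\mathbb{C}_q[W]$ are identified with vectors in $\ell^2(W)$ via $T_w\mapsto\delta_w$. $h_0=1$, $h_m=\sum_{|w|=m}T_w$. For $l\in\mathbb{N}_0$, $q_l$ is the projection onto $\mathrm{span}\{T_w:|w|=l\}$ and $\mathbb{C}_q^l[W]=q_l(\mathbb{C}_q[W])$. $S_l=\mathrm{span}\{q_l(h_1x),q_l(xh_1): x\in\mathbb{C}_q^{l-1}[W]\}$ and $\mathbb{C}_q^l[W]\ominus S_l$ is the orthogonal complement of $S_l$ in $\mathbb{C}_q^l[W]$ in $\ell^2(W)$. For $\gamma\in\mathbb{C}_q^l[W]$ and $m,n\in\mathbb{N}_0$, $\gamma_{m,n}=q_{m+n+l}(h_m\gamma h_n)$. *)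

theory Defs
  imports Complex_Main
begin

text \<open>Elements of W = free product of L copies of Z/2Z are represented by reduced
words: lists over the generators 0..L-1 with no two consecutive letters equal.  Elements of C_q[W] (and of l^2(W)) are functions
nat list => complex; C_q[W] consists of the finitely supported ones supported on
reduced words, T_w being the indicator of w.\<close>

definition reduced :: "nat \<Rightarrow> nat list \<Rightarrow> bool" where
  "reduced L w \<longleftrightarrow> set w \<subseteq> {..<L} \<and> successively (\<noteq>) w"

definition hecke :: "nat \<Rightarrow> (nat list \<Rightarrow> complex) \<Rightarrow> bool" where
  "hecke L x \<longleftrightarrow> finite {w. x w \<noteq> 0} \<and> (\<forall>w. x w \<noteq> 0 \<longrightarrow> reduced L w)"

definition hp :: "real \<Rightarrow> real" where
  "hp q = (q - 1) / q\<^sup>2"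

text \<open>Left multiplication by T_s:  T_s T_w = T_{sw} if |sw| > |w|,
  T_s T_w = T_{sw} + p T_w if |sw| < |w|, extended linearly.\<close>
definition Tgen :: "nat \<Rightarrow> real \<Rightarrow> nat \<Rightarrow> (nat list \<Rightarrow> complex) \<Rightarrow> (nat list \<Rightarrow> complex)" where
  "Tgen L q s x = (\<lambda>u. if \<not> reduced L u then 0
       else if u \<noteq> [] \<and> hd u = s then x (tl u) + complex_of_real (hp q) * x u
       else x (s # u))"

definition Tword :: "nat \<Rightarrow> real \<Rightarrow> nat list \<Rightarrow> (nat list \<Rightarrow> complex) \<Rightarrow> (nat list \<Rightarrow> complex)" where
  "Tword L q v x = foldr (Tgen L q) v x"

definition hmult :: "nat \<Rightarrow> real \<Rightarrow> (nat list \<Rightarrow> complex) \<Rightarrow> (nat list \<Rightarrow> complex) \<Rightarrow> (nat list \<Rightarrow> complex)" where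
  "hmult L q x y = (\<lambda>u. \<Sum>v\<in>{v. x v \<noteq> 0}. x v * Tword L q v y u)"

definition linner :: "(nat list \<Rightarrow> complex) \<Rightarrow> (nat list \<Rightarrow> complex) \<Rightarrow> complex" where
  "linner x y = (\<Sum>w\<in>{w. x w \<noteq> 0}. x w * cnj (y w))"

definition hsum :: "nat \<Rightarrow> nat \<Rightarrow> (nat list \<Rightarrow> complex)" where
  "hsum L m = (\<lambda>w. if reduced L w \<and> length w = m then 1 else 0)"

definition qproj :: "nat \<Rightarrow> (nat list \<Rightarrow> complex) \<Rightarrow> (nat list \<Rightarrow> complex)" where
  "qproj l x = (\<lambda>w. if length w = l then x w else 0)"

definition Cl :: "nat \<Rightarrow> nat \<Rightarrow> (nat list \<Rightarrow> complex) set" where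
  "Cl L l = {x. hecke L x \<and> (\<forall>w. length w \<noteq> l \<longrightarrow> x w = 0)}"

definition cspan :: "(nat list \<Rightarrow> complex) set \<Rightarrow> (nat list \<Rightarrow> complex) set" where
  "cspan A = {x. \<exists>F c. finite F \<and> F \<subseteq> A \<and> x = (\<lambda>w. \<Sum>a\<in>F. c a * a w)}"

definition Sl :: "nat \<Rightarrow> real \<Rightarrow> nat \<Rightarrow> (nat list \<Rightarrow> complex) set" where
  "Sl L q l = cspan ({qproj l (hmult L q (hsum L 1) x) | x. x \<in> Cl L (l - 1)}
                   \<union> {qproj l (hmult L q x (hsum L 1)) | x. x \<in> Cl L (l - 1)})"

definition Cperp :: "nat \<Rightarrow> real \<Rightarrow> nat \<Rightarrow> (nat list \<Rightarrow> complex) set" where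
  "Cperp L q l = {x. x \<in> Cl L l \<and> (\<forall>y\<in>Sl L q l. linner x y = 0)}"

definition gmn :: "nat \<Rightarrow> real \<Rightarrow> nat \<Rightarrow> (nat list \<Rightarrow> complex) \<Rightarrow> nat \<Rightarrow> nat \<Rightarrow> (nat list \<Rightarrow> complex)" where
  "gmn L q l g m n = qproj (m + n + l) (hmult L q (hmult L q (hsum L m) g) (hsum L n))"

end

theory Submission
  imports Defs
begin

text \<open>The Hecke deformation only ever shortens words, so the top-degree part
  q_{m+n+l}(h_m \<gamma> h_n) is computed as in the group algebra: on a reduced word u of length
  m + n + l it is \<gamma> evaluated on the window of u of length l starting at position m.  In
  particular neither q nor the bound L \<ge> 3 plays any role.  An inner product of two such
  vectors is therefore a sum over reduced words pairing two windows.  Every letter outside both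
  windows can be chosen in L - 1 ways independently of the rest, which produces the power of
  L - 1 and leaves a sum in which the two windows are offset by k = |m - m'|.  Orthogonality to
  S_l says exactly that \<gamma> sums to zero over all one-letter extensions (on either side) of a
  reduced word of length l - 1.  For l \<ge> 2 and k \<ge> 1 the offset sum factors through such an
  extension sum and vanishes; for l = 1 it says \<Sum>_b \<beta>(b) = 0, so summing over the letters
  different from a given one produces a factor -1 per unit of offset.\<close>

section \<open>Reduced words\<close>

definition reduced_words :: "nat \<Rightarrow> nat \<Rightarrow> nat list set" where
  "reduced_words L N = {u. reduced L u \<and> length u = N}"

definition left_ext :: "nat \<Rightarrow> nat list \<Rightarrow> nat set" where
  "left_ext L u = {a. a < L \<and> (u \<noteq> [] \<longrightarrow> a \<noteq> hd u)}"

definition right_ext :: "nat \<Rightarrow> nat list \<Rightarrow> nat set" where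
  "right_ext L u = {a. a < L \<and> (u \<noteq> [] \<longrightarrow> a \<noteq> last u)}"

lemma reduced_Nil [simp]: "reduced L []"
  by (simp add: reduced_def)

lemma reduced_Cons: "reduced L (a # u) \<longleftrightarrow> a < L \<and> reduced L u \<and> (u \<noteq> [] \<longrightarrow> a \<noteq> hd u)"
  by (auto simp: reduced_def successively_Cons)

lemma reduced_append:
  "reduced L (u @ v) \<longleftrightarrow> reduced L u \<and> reduced L v \<and> (u = [] \<or> v = [] \<or> last u \<noteq> hd v)"
  by (auto simp: reduced_def successively_append_iff)

lemma reduced_snoc: "reduced L (u @ [b]) \<longleftrightarrow> b < L \<and> reduced L u \<and> (u \<noteq> [] \<longrightarrow> b \<noteq> last u)"
  by (auto simp: reduced_append reduced_Cons)

lemma reduced_take: "reduced L u \<Longrightarrow> reduced L (take k u)"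
  by (metis append_take_drop_id reduced_append)

lemma reduced_drop: "reduced L u \<Longrightarrow> reduced L (drop k u)"
  by (metis append_take_drop_id reduced_append)

lemma finite_reduced_words: "finite (reduced_words L N)"
proof (rule finite_subset)
  show "reduced_words L N \<subseteq> {xs. set xs \<subseteq> {..<L} \<and> length xs = N}"
    by (auto simp: reduced_words_def reduced_def)
  show "finite {xs. set xs \<subseteq> {..<L} \<and> length xs = N}"
    by (rule finite_lists_length_eq) simp
qed

lemma reduced_words_hd_last:
  assumes "u \<in> reduced_words L N" "0 < N"
  shows "u \<noteq> []" "hd u < L" "last u < L"
proof -
  have "u \<noteq> []" "set u \<subseteq> {..<L}" using assms by (auto simp: reduced_words_def reduced_def)
  then show "u \<noteq> []" "hd u < L" "last u < L" using hd_in_set last_in_set by blast+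
qed

lemma finite_left_ext: "finite (left_ext L u)"
  by (auto simp: left_ext_def)

lemma finite_right_ext: "finite (right_ext L u)"
  by (auto simp: right_ext_def)

lemma card_left_ext: "u \<in> reduced_words L N \<Longrightarrow> 0 < N \<Longrightarrow> card (left_ext L u) = L - 1"
  using reduced_words_hd_last[of u]
  by (subgoal_tac "left_ext L u = {..<L} - {hd u}") (auto simp: left_ext_def)

lemma card_right_ext: "u \<in> reduced_words L N \<Longrightarrow> 0 < N \<Longrightarrow> card (right_ext L u) = L - 1"
  using reduced_words_hd_last[of u]
  by (subgoal_tac "right_ext L u = {..<L} - {last u}") (auto simp: right_ext_def)

lemma sum_reduced_words_Suc_left:
  "(\<Sum>u\<in>reduced_words L (Suc N). F u) = (\<Sum>u\<in>reduced_words L N. \<Sum>a\<in>left_ext L u. F (a # u))"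
proof -
  have "(\<Sum>u\<in>reduced_words L N. \<Sum>a\<in>left_ext L u. F (a # u))
      = (\<Sum>p\<in>Sigma (reduced_words L N) (left_ext L). F (snd p # fst p))"
    by (subst sum.Sigma) (auto simp: finite_reduced_words left_ext_def split_beta)
  also have "\<dots> = (\<Sum>u\<in>reduced_words L (Suc N). F u)"
    by (rule sum.reindex_bij_witness[of _ "\<lambda>w. (tl w, hd w)" "\<lambda>p. snd p # fst p"])
       (auto simp: reduced_words_def left_ext_def reduced_Cons length_Suc_conv)
  finally show ?thesis by simp
qed

lemma sum_reduced_words_Suc_right:
  "(\<Sum>u\<in>reduced_words L (Suc N). F u) = (\<Sum>u\<in>reduced_words L N. \<Sum>a\<in>right_ext L u. F (u @ [a]))"
proof -
  have "(\<Sum>u\<in>reduced_words L N. \<Sum>a\<in>right_ext L u. F (u @ [a]))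
      = (\<Sum>p\<in>Sigma (reduced_words L N) (right_ext L). F (fst p @ [snd p]))"
    by (subst sum.Sigma) (auto simp: finite_reduced_words right_ext_def split_beta)
  also have "\<dots> = (\<Sum>u\<in>reduced_words L (Suc N). F u)"
  proof (rule sum.reindex_bij_witness[of _ "\<lambda>w. (butlast w, last w)" "\<lambda>p. fst p @ [snd p]"])
    fix w assume w: "w \<in> reduced_words L (Suc N)"
    then have "w \<noteq> []" by (auto simp: reduced_words_def)
    then have "w = butlast w @ [last w]" by simp
    then show "fst (butlast w, last w) @ [snd (butlast w, last w)] = w"
      and "(butlast w, last w) \<in> Sigma (reduced_words L N) (right_ext L)"
      using w reduced_snoc[of L "butlast w" "last w"] by (auto simp: reduced_words_def right_ext_def)
  qed (auto simp: reduced_words_def right_ext_def reduced_snoc)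
  finally show ?thesis by simp
qed

section \<open>Top-degree part of a product\<close>

lemma Tword_Cons: "Tword L q (s # v) z = Tgen L q s (Tword L q v z)"
  by (simp add: Tword_def)

lemma Tword_top_degree:
  assumes z_above: "\<And>w. c < length w \<Longrightarrow> z w = 0"
    and z_reduced: "\<And>w. \<not> reduced L w \<Longrightarrow> z w = 0"
  shows "(\<forall>u. c + length v < length u \<longrightarrow> Tword L q v z u = 0) \<and>
         (\<forall>u. length u = c + length v \<longrightarrow> Tword L q v z u =
            (if reduced L u \<and> take (length v) u = v then z (drop (length v) u) else 0))"
proof (induction v)
  case Nil
  have "Tword L q [] z = z" by (simp add: Tword_def)
  then show ?case using assms by auto
next
  case (Cons s v)
  let ?Z = "Tword L q v z"
  have above: "?Z u = 0" if "c + length v < length u" for u using Cons.IH that by blast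
  show ?case
  proof (intro conjI allI impI)
    fix u :: "nat list" assume "c + length (s # v) < length u"
    then have "?Z (tl u) = 0" "?Z u = 0" "?Z (s # u) = 0" by (simp_all add: above)
    then show "Tword L q (s # v) z u = 0"
      by (simp add: Tword_Cons Tgen_def)
  next
    fix u :: "nat list" assume u: "length u = c + length (s # v)"
    then obtain a r where u_eq: "u = a # r" and r: "length r = c + length v"
      by (cases u) auto
    have "?Z u = 0" "?Z (s # u) = 0" using u by (simp_all add: above)
    then have "Tword L q (s # v) z u = (if reduced L u \<and> a = s then ?Z r else 0)"
      using u_eq by (cases "a = s") (simp_all add: Tword_Cons Tgen_def)
    then show "Tword L q (s # v) z u =
        (if reduced L u \<and> take (length (s # v)) u = s # v then z (drop (length (s # v)) u) else 0)"
      using Cons.IH[THEN conjunct2, rule_format, OF r] u_eq by (auto simp: reduced_Cons)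
  qed
qed

lemma Tgen_support:
  "{u. Tgen L q s z u \<noteq> 0} \<subseteq> Cons s ` {w. z w \<noteq> 0} \<union> {w. z w \<noteq> 0} \<union> tl ` {w. z w \<noteq> 0}"
proof
  fix u assume "u \<in> {u. Tgen L q s z u \<noteq> 0}"
  then have u: "Tgen L q s z u \<noteq> 0" by simp
  show "u \<in> Cons s ` {w. z w \<noteq> 0} \<union> {w. z w \<noteq> 0} \<union> tl ` {w. z w \<noteq> 0}"
  proof (cases "u \<noteq> [] \<and> hd u = s")
    case True
    then have u_eq: "u = s # tl u" by auto
    have "z (tl u) \<noteq> 0 \<or> z u \<noteq> 0" using u True by (auto simp: Tgen_def split: if_splits)
    then show ?thesis
    proof
      assume "z (tl u) \<noteq> 0"
      then have "s # tl u \<in> Cons s ` {w. z w \<noteq> 0}" by blast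
      then show ?thesis using u_eq by simp
    qed simp
  next
    case False
    then have "z (s # u) \<noteq> 0" using u by (auto simp: Tgen_def split: if_splits)
    then have "tl (s # u) \<in> tl ` {w. z w \<noteq> 0}" by blast
    then show ?thesis by simp
  qed
qed

lemma finite_Tword_support: "finite {w. z w \<noteq> 0} \<Longrightarrow> finite {w. Tword L q v z w \<noteq> 0}"
proof (induction v)
  case Nil
  then show ?case by (simp add: Tword_def)
next
  case (Cons s v)
  then show ?case unfolding Tword_Cons by (intro finite_subset[OF Tgen_support]) simp
qed

lemma finite_hmult_support:
  assumes "finite {w. x w \<noteq> 0}" "finite {w. y w \<noteq> 0}"
  shows "finite {w. hmult L q x y w \<noteq> 0}"
proof (rule finite_subset)
  show "{w. hmult L q x y w \<noteq> 0} \<subseteq> (\<Union>v\<in>{w. x w \<noteq> 0}. {w. Tword L q v y w \<noteq> 0})"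
  proof
    fix w assume "w \<in> {w. hmult L q x y w \<noteq> 0}"
    then obtain v where "x v \<noteq> 0" "x v * Tword L q v y w \<noteq> 0"
      unfolding hmult_def using sum.not_neutral_contains_not_neutral by force
    then show "w \<in> (\<Union>v\<in>{w. x w \<noteq> 0}. {w. Tword L q v y w \<noteq> 0})" by auto
  qed
  show "finite (\<Union>v\<in>{w. x w \<noteq> 0}. {w. Tword L q v y w \<noteq> 0})"
    using assms by (simp add: finite_Tword_support)
qed

context
  fixes L :: nat and x y :: "nat list \<Rightarrow> complex" and a b :: nat
  assumes x_finite: "finite {w. x w \<noteq> 0}"
    and x_above: "\<And>w. a < length w \<Longrightarrow> x w = 0"
    and y_above: "\<And>w. b < length w \<Longrightarrow> y w = 0"
    and y_reduced: "\<And>w. \<not> reduced L w \<Longrightarrow> y w = 0"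
begin

lemma hmult_above:
  assumes "a + b < length u"
  shows "hmult L q x y u = 0"
  unfolding hmult_def
proof (rule sum.neutral, rule ballI)
  fix v assume "v \<in> {v. x v \<noteq> 0}"
  then have "length v \<le> a" using x_above not_le by blast
  then have "b + length v < length u" using assms by linarith
  then have "Tword L q v y u = 0"
    using Tword_top_degree[where c = b and z = y and L = L and q = q and v = v] y_above y_reduced by blast
  then show "x v * Tword L q v y u = 0" by simp
qed

lemma hmult_top_degree:
  assumes u: "length u = a + b"
  shows "hmult L q x y u = (if reduced L u then x (take a u) * y (drop a u) else 0)"
proof -
  define R where "R = (if reduced L u then x (take a u) * y (drop a u) else 0)"
  have "x v * Tword L q v y u = (if v = take a u then R else 0)" if "x v \<noteq> 0" for v
  proof -
    have "length v \<le> a" using that x_above not_le by blast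
    then consider "length v = a" | "length v < a" by linarith
    then show ?thesis
      using u Tword_top_degree[where c = b and z = y and L = L and q = q and v = v] y_above y_reduced
      by cases (auto simp: R_def)
  qed
  then have "hmult L q x y u = (\<Sum>v\<in>{v. x v \<noteq> 0}. if v = take a u then R else 0)"
    unfolding hmult_def by (intro sum.cong) simp_all
  also have "\<dots> = R"
    using x_finite by (auto simp: sum.delta R_def)
  finally show ?thesis unfolding R_def .
qed

end

section \<open>Windows and orthogonality to S_l\<close>

lemma Cl_finite: "g \<in> Cl L l \<Longrightarrow> finite {w. g w \<noteq> 0}"
  by (simp add: Cl_def hecke_def)

lemma Cl_not_reduced: "g \<in> Cl L l \<Longrightarrow> \<not> reduced L w \<Longrightarrow> g w = 0"
  unfolding Cl_def hecke_def by blast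

lemma Cl_length: "g \<in> Cl L l \<Longrightarrow> length w \<noteq> l \<Longrightarrow> g w = 0"
  unfolding Cl_def by blast

lemma Cl_above: "g \<in> Cl L l \<Longrightarrow> l < length w \<Longrightarrow> g w = 0"
  unfolding Cl_def by simp

lemma Cl_support: "g \<in> Cl L l \<Longrightarrow> {w. g w \<noteq> 0} \<subseteq> reduced_words L l"
  using Cl_not_reduced Cl_length by (fastforce simp: reduced_words_def)

lemma hsum_in_Cl: "hsum L m \<in> Cl L m"
proof -
  have "{w. hsum L m w \<noteq> 0} = reduced_words L m"
    by (auto simp: hsum_def reduced_words_def)
  then show ?thesis
    by (auto simp: Cl_def hecke_def hsum_def finite_reduced_words)
qed

lemma indicator_in_Cl: "y \<in> reduced_words L k \<Longrightarrow> (\<lambda>w. if w = y then 1 else 0) \<in> Cl L k"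
  by (auto simp: Cl_def hecke_def reduced_words_def)

lemma qproj_hmult_Cl:
  assumes x: "x \<in> Cl L a" and y: "y \<in> Cl L b"
  shows "qproj (a + b) (hmult L q x y) =
    (\<lambda>u. if reduced L u \<and> length u = a + b then x (take a u) * y (drop a u) else 0)"
  using hmult_top_degree[OF Cl_finite[OF x] Cl_above[OF x] Cl_above[OF y] Cl_not_reduced[OF y]]
  by (auto simp: qproj_def)

lemma gmn_eq_window:
  assumes g: "g \<in> Cl L l"
  shows "gmn L q l g m n =
    (\<lambda>u. if reduced L u \<and> length u = m + n + l then g (take l (drop m u)) else 0)"
proof
  fix u :: "nat list"
  define z where "z = hmult L q (hsum L m) g"
  note h = hsum_in_Cl[of L]
  have z_finite: "finite {w. z w \<noteq> 0}"
    unfolding z_def using Cl_finite[OF h] Cl_finite[OF g] by (rule finite_hmult_support)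
  have z_above: "z w = 0" if "m + l < length w" for w
    unfolding z_def
    using hmult_above[OF Cl_finite[OF h] Cl_above[OF h] Cl_above[OF g] Cl_not_reduced[OF g] that] .
  have z_top: "z w = (if reduced L w then hsum L m (take m w) * g (drop m w) else 0)"
    if "length w = m + l" for w
    unfolding z_def
    using hmult_top_degree[OF Cl_finite[OF h] Cl_above[OF h] Cl_above[OF g] Cl_not_reduced[OF g] that] .
  show "gmn L q l g m n u =
    (if reduced L u \<and> length u = m + n + l then g (take l (drop m u)) else 0)"
  proof (cases "length u = (m + l) + n")
    case True
    then have "gmn L q l g m n u =
        (if reduced L u then z (take (m + l) u) * hsum L n (drop (m + l) u) else 0)"
      using hmult_top_degree[OF z_finite z_above Cl_above[OF h] Cl_not_reduced[OF h] True]
      by (simp add: gmn_def qproj_def z_def add.commute add.left_commute)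
    also have "\<dots> = (if reduced L u then g (take l (drop m u)) else 0)"
      using True z_top[of "take (m + l) u"]
      by (auto simp: hsum_def reduced_take reduced_drop take_drop add.commute)
    finally show ?thesis using True by (simp add: add.commute add.left_commute)
  qed (simp add: gmn_def qproj_def add.commute add.left_commute)
qed

lemma linner_eq_sum:
  assumes "finite S" "{w. x w \<noteq> 0} \<subseteq> S"
  shows "linner x y = (\<Sum>w\<in>S. x w * cnj (y w))"
  unfolding linner_def by (rule sum.mono_neutral_left[OF assms]) auto

lemma Cperp_sum_eq_zero:
  assumes g: "g \<in> Cperp L q l" and E: "finite E" "(\<lambda>u. if u \<in> E then 1 else 0) \<in> Sl L q l"
  shows "(\<Sum>w\<in>E. g w) = 0"
proof -
  have "g \<in> Cl L l" using g by (simp add: Cperp_def)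
  then have fin: "finite ({w. g w \<noteq> 0} \<union> E)"
    using E by (simp add: Cl_finite)
  have "0 = linner g (\<lambda>u. if u \<in> E then 1 else 0)"
    using g E by (simp add: Cperp_def)
  also have "\<dots> = (\<Sum>w\<in>{w. g w \<noteq> 0} \<union> E. if w \<in> E then g w else 0)"
    by (subst linner_eq_sum[OF fin]) (auto intro: sum.cong)
  also have "\<dots> = (\<Sum>w\<in>E. g w)"
    using fin by (simp add: sum.inter_restrict[symmetric] Int_absorb1)
  finally show ?thesis by simp
qed

lemma in_cspan: "a \<in> A \<Longrightarrow> a \<in> cspan A"
  unfolding cspan_def by (intro CollectI exI[of _ "{a}"] exI[of _ "\<lambda>_. 1"]) simp

lemma image_Cons_left_ext:
  assumes "y \<in> reduced_words L k"
  shows "(\<lambda>a. a # y) ` left_ext L y = {u. reduced L u \<and> length u = Suc k \<and> drop 1 u = y}"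
proof (intro set_eqI iffI)
  fix u assume "u \<in> (\<lambda>a. a # y) ` left_ext L y"
  then show "u \<in> {u. reduced L u \<and> length u = Suc k \<and> drop 1 u = y}"
    using assms by (auto simp: left_ext_def reduced_words_def reduced_Cons)
next
  fix u assume "u \<in> {u. reduced L u \<and> length u = Suc k \<and> drop 1 u = y}"
  then show "u \<in> (\<lambda>a. a # y) ` left_ext L y"
    by (cases u) (auto simp: left_ext_def reduced_Cons)
qed

lemma image_snoc_right_ext:
  assumes "y \<in> reduced_words L k"
  shows "(\<lambda>a. y @ [a]) ` right_ext L y = {u. reduced L u \<and> length u = Suc k \<and> take k u = y}"
proof (intro set_eqI iffI)
  fix u assume "u \<in> (\<lambda>a. y @ [a]) ` right_ext L y"
  then show "u \<in> {u. reduced L u \<and> length u = Suc k \<and> take k u = y}"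
    using assms by (auto simp: right_ext_def reduced_words_def reduced_snoc reduced_Cons)
next
  fix u assume u: "u \<in> {u. reduced L u \<and> length u = Suc k \<and> take k u = y}"
  then have "u = y @ [last u]"
    by (metis (mono_tags) append_butlast_last_id butlast_conv_take diff_Suc_1 list.size(3)
        mem_Collect_eq nat.distinct(1))
  then show "u \<in> (\<lambda>a. y @ [a]) ` right_ext L y"
    using u reduced_snoc[of L y "last u"] by (auto simp: right_ext_def)
qed

lemma Cperp_left_ext_sum:
  assumes g: "g \<in> Cperp L q (Suc k)" and y: "y \<in> reduced_words L k"
  shows "(\<Sum>a\<in>left_ext L y. g (a # y)) = 0"
proof -
  define E where "E = (\<lambda>a. a # y) ` left_ext L y"
  have "(\<lambda>u. if u \<in> E then 1 else 0) =
      qproj (1 + k) (hmult L q (hsum L 1) (\<lambda>w. if w = y then 1 else 0))"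
    unfolding qproj_hmult_Cl[OF hsum_in_Cl indicator_in_Cl[OF y]] E_def image_Cons_left_ext[OF y]
    by (auto simp: hsum_def reduced_take)
  then have E_in_Sl: "(\<lambda>u. if u \<in> E then 1 else 0) \<in> Sl L q (Suc k)"
    unfolding Sl_def using indicator_in_Cl[OF y] by (intro in_cspan) auto
  then have "(\<Sum>w\<in>E. g w) = 0"
    using Cperp_sum_eq_zero[OF g _ E_in_Sl] by (simp add: E_def finite_left_ext)
  then show ?thesis
    by (simp add: E_def sum.reindex inj_on_def)
qed

lemma Cperp_right_ext_sum:
  assumes g: "g \<in> Cperp L q (Suc k)" and y: "y \<in> reduced_words L k"
  shows "(\<Sum>a\<in>right_ext L y. g (y @ [a])) = 0"
proof -
  define E where "E = (\<lambda>a. y @ [a]) ` right_ext L y"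
  have "(\<lambda>u. if u \<in> E then 1 else 0) =
      qproj (k + 1) (hmult L q (\<lambda>w. if w = y then 1 else 0) (hsum L 1))"
    unfolding qproj_hmult_Cl[OF indicator_in_Cl[OF y] hsum_in_Cl] E_def image_snoc_right_ext[OF y]
    by (auto simp: hsum_def reduced_drop)
  then have E_in_Sl: "(\<lambda>u. if u \<in> E then 1 else 0) \<in> Sl L q (Suc k)"
    unfolding Sl_def using indicator_in_Cl[OF y] by (intro in_cspan) auto
  then have "(\<Sum>w\<in>E. g w) = 0"
    using Cperp_sum_eq_zero[OF g _ E_in_Sl] by (simp add: E_def finite_right_ext)
  then show ?thesis
    by (simp add: E_def sum.reindex inj_on_def)
qed

section \<open>Pairing of windows\<close>

definition window_pairing ::
  "nat \<Rightarrow> nat \<Rightarrow> (nat list \<Rightarrow> complex) \<Rightarrow> (nat list \<Rightarrow> complex) \<Rightarrow> nat \<Rightarrow> nat \<Rightarrow> nat \<Rightarrow> complex"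
where
  "window_pairing L l g g' m m' N =
    (\<Sum>u\<in>reduced_words L N. g (take l (drop m u)) * cnj (g' (take l (drop m' u))))"

lemma linner_gmn:
  assumes "g \<in> Cl L l" "g' \<in> Cl L l"
  shows "linner (gmn L q l g m n) (gmn L q l g' m' n') =
    (if m + n = m' + n' then window_pairing L l g g' m m' (m + n + l) else 0)"
proof -
  have "{w. gmn L q l g m n w \<noteq> 0} \<subseteq> reduced_words L (m + n + l)"
    by (auto simp: gmn_eq_window[OF assms(1)] reduced_words_def split: if_splits)
  then show ?thesis
    by (subst linner_eq_sum[OF finite_reduced_words]) (auto simp: window_pairing_def
        gmn_eq_window[OF assms(1)] gmn_eq_window[OF assms(2)] reduced_words_def intro: sum.cong)
qed

lemma window_pairing_swap: "window_pairing L l g g' m m' N = cnj (window_pairing L l g' g m' m N)"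
  by (simp add: window_pairing_def mult.commute)

lemma window_pairing_aligned: "g \<in> Cl L l \<Longrightarrow> window_pairing L l g g' 0 0 l = linner g g'"
  by (subst linner_eq_sum[OF finite_reduced_words Cl_support])
     (auto simp: window_pairing_def reduced_words_def intro: sum.cong)

lemma linner_cnj_swap: "x \<in> Cl L l \<Longrightarrow> y \<in> Cl L l \<Longrightarrow> cnj (linner y x) = linner x y"
  by (simp add: linner_eq_sum[OF finite_reduced_words Cl_support] mult.commute)

lemma window_pairing_strip_left:
  assumes "0 < N"
  shows "window_pairing L l g g' (i + m) (i + m') (i + N) =
    of_nat (L - 1) ^ i * window_pairing L l g g' m m' N"
proof (induction i)
  case (Suc i)
  have "window_pairing L l g g' (Suc i + m) (Suc i + m') (Suc i + N) =
      (\<Sum>u\<in>reduced_words L (i + N). \<Sum>a\<in>left_ext L u.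
        g (take l (drop (i + m) u)) * cnj (g' (take l (drop (i + m') u))))"
    unfolding window_pairing_def by (simp add: sum_reduced_words_Suc_left)
  also have "\<dots> = of_nat (L - 1) * window_pairing L l g g' (i + m) (i + m') (i + N)"
    unfolding window_pairing_def sum_distrib_left
    using assms by (intro sum.cong) (simp_all add: card_left_ext)
  finally show ?case by (simp add: Suc.IH)
qed simp

lemma window_pairing_strip_right:
  assumes "0 < N" "m + l \<le> N" "m' + l \<le> N"
  shows "window_pairing L l g g' m m' (N + j) = of_nat (L - 1) ^ j * window_pairing L l g g' m m' N"
proof (induction j)
  case (Suc j)
  have "window_pairing L l g g' m m' (N + Suc j) =
      (\<Sum>u\<in>reduced_words L (N + j). \<Sum>a\<in>right_ext L u.
        g (take l (drop m (u @ [a]))) * cnj (g' (take l (drop m' (u @ [a])))))"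
    unfolding window_pairing_def by (simp add: sum_reduced_words_Suc_right)
  also have "\<dots> = of_nat (L - 1) * window_pairing L l g g' m m' (N + j)"
    unfolding window_pairing_def sum_distrib_left
    using assms by (intro sum.cong) (simp_all add: card_right_ext reduced_words_def)
  finally show ?case by (simp add: Suc.IH)
qed simp

lemma window_pairing_reduce:
  assumes "m \<le> m'" "m' + l \<le> N" "0 < l"
  shows "window_pairing L l g g' m m' N =
    of_nat (L - 1) ^ (N - (m' - m) - l) * window_pairing L l g g' 0 (m' - m) (m' - m + l)"
proof -
  define k j where "k = m' - m" and "j = N - m' - l"
  have "window_pairing L l g g' m m' N = window_pairing L l g g' (m + 0) (m + k) (m + (k + l + j))"
    using assms by (simp add: k_def j_def)
  also have "\<dots> = of_nat (L - 1) ^ m * window_pairing L l g g' 0 k ((k + l) + j)"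
    using window_pairing_strip_left[of "k + l + j" L l g g' m 0 k] assms by simp
  also have "\<dots> = of_nat (L - 1) ^ (m + j) * window_pairing L l g g' 0 k (k + l)"
    using assms by (simp add: window_pairing_strip_right power_add)
  finally have "window_pairing L l g g' m m' N =
      of_nat (L - 1) ^ (m + j) * window_pairing L l g g' 0 k (k + l)" .
  moreover have "m + j = N - (m' - m) - l" "k + l = m' - m + l"
    using assms by (simp_all add: k_def j_def)
  ultimately show ?thesis by (simp add: k_def)
qed

lemma window_pairing_offset_Cperp_left:
  assumes g: "g \<in> Cperp L q (Suc l)" and "0 < l" "0 < k"
  shows "window_pairing L (Suc l) g g' 0 k (k + Suc l) = 0"
proof -
  have "window_pairing L (Suc l) g g' 0 k (k + Suc l) =
      (\<Sum>u\<in>reduced_words L (k + l). \<Sum>a\<in>left_ext L u.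
        g (a # take l u) * cnj (g' (take (Suc l) (drop (k - 1) u))))"
    unfolding window_pairing_def using \<open>0 < k\<close>
    by (simp add: sum_reduced_words_Suc_left drop_Cons')
  also have "\<dots> = (\<Sum>u\<in>reduced_words L (k + l).
      (\<Sum>a\<in>left_ext L (take l u). g (a # take l u)) * cnj (g' (take (Suc l) (drop (k - 1) u))))"
  proof (rule sum.cong)
    fix u assume "u \<in> reduced_words L (k + l)"
    then have "left_ext L (take l u) = left_ext L u"
      using \<open>0 < l\<close> by (auto simp: left_ext_def reduced_words_def)
    then show "(\<Sum>a\<in>left_ext L u. g (a # take l u) * cnj (g' (take (Suc l) (drop (k - 1) u)))) =
        (\<Sum>a\<in>left_ext L (take l u). g (a # take l u)) * cnj (g' (take (Suc l) (drop (k - 1) u)))"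
      by (simp add: sum_distrib_right)
  qed simp
  also have "\<dots> = 0"
    by (intro sum.neutral ballI)
      (simp add: Cperp_left_ext_sum[OF g] reduced_words_def reduced_take)
  finally show ?thesis .
qed

lemma window_pairing_offset_Cperp_right:
  assumes g: "g \<in> Cperp L q (Suc l)" and "0 < l" "0 < k"
  shows "window_pairing L (Suc l) g' g 0 k (k + Suc l) = 0"
proof -
  have "window_pairing L (Suc l) g' g 0 k (k + Suc l) =
      (\<Sum>u\<in>reduced_words L (k + l). \<Sum>a\<in>right_ext L u.
        g' (take (Suc l) u) * cnj (g (drop k u @ [a])))"
    unfolding window_pairing_def using \<open>0 < k\<close>
    by (simp add: sum_reduced_words_Suc_right) (intro sum.cong, simp_all add: reduced_words_def)
  also have "\<dots> = (\<Sum>u\<in>reduced_words L (k + l).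
      g' (take (Suc l) u) * cnj (\<Sum>a\<in>right_ext L (drop k u). g (drop k u @ [a])))"
  proof (rule sum.cong)
    fix u assume "u \<in> reduced_words L (k + l)"
    then have "right_ext L (drop k u) = right_ext L u"
      using \<open>0 < l\<close> by (auto simp: right_ext_def reduced_words_def)
    then show "(\<Sum>a\<in>right_ext L u. g' (take (Suc l) u) * cnj (g (drop k u @ [a]))) =
        g' (take (Suc l) u) * cnj (\<Sum>a\<in>right_ext L (drop k u). g (drop k u @ [a]))"
      by (simp add: sum_distrib_left)
  qed simp
  also have "\<dots> = 0"
    by (intro sum.neutral ballI)
      (simp add: Cperp_right_ext_sum[OF g] reduced_words_def reduced_drop)
  finally show ?thesis .
qed

lemma Cperp_one_sum_right_ext:
  assumes b: "\<beta> \<in> Cperp L q 1" and u: "u \<in> reduced_words L N" "0 < N"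
  shows "(\<Sum>a\<in>right_ext L u. \<beta> [a]) = - \<beta> [last u]"
proof -
  have "right_ext L [] = {..<L}"
    by (auto simp: right_ext_def)
  then have "(\<Sum>a\<in>{..<L}. \<beta> [a]) = 0"
    using Cperp_right_ext_sum[of \<beta> L q 0 "[]"] b by (simp add: reduced_words_def)
  moreover have "right_ext L u = {..<L} - {last u}" "last u < L"
    using reduced_words_hd_last[OF u] by (auto simp: right_ext_def)
  ultimately show ?thesis by (simp add: sum_diff1)
qed

lemma window_pairing_offset_degree_one:
  assumes b: "\<beta> \<in> Cl L 1" and b': "\<beta>' \<in> Cperp L q 1"
  shows "window_pairing L 1 \<beta> \<beta>' 0 k (Suc k) = (-1) ^ k * linner \<beta> \<beta>'"
proof (induction k)
  case 0
  then show ?case using window_pairing_aligned[OF b] by simp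
next
  case (Suc k)
  have "window_pairing L 1 \<beta> \<beta>' 0 (Suc k) (Suc (Suc k)) =
      (\<Sum>u\<in>reduced_words L (Suc k). \<beta> (take 1 u) * cnj (\<Sum>a\<in>right_ext L u. \<beta>' [a]))"
    unfolding window_pairing_def
    by (simp add: sum_reduced_words_Suc_right sum_distrib_left)
      (intro sum.cong, simp_all add: reduced_words_def)
  also have "\<dots> = - window_pairing L 1 \<beta> \<beta>' 0 k (Suc k)"
    unfolding window_pairing_def sum_negf[symmetric]
  proof (intro sum.cong refl)
    fix u assume u: "u \<in> reduced_words L (Suc k)"
    then have "take 1 (drop k u) = [last u]"
      by (cases u rule: rev_cases) (auto simp: reduced_words_def)
    then show "\<beta> (take 1 u) * cnj (\<Sum>a\<in>right_ext L u. \<beta>' [a]) =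
        - (\<beta> (take 1 (drop 0 u)) * cnj (\<beta>' (take 1 (drop k u))))"
      using Cperp_one_sum_right_ext[OF b' u] by simp
  qed
  finally show ?case using Suc.IH by simp
qed

lemma linner_gmn_offset:
  assumes g: "g \<in> Cl L l" and g': "g' \<in> Cl L l" and "0 < l" and mn: "m + n = m' + n'"
  shows "linner (gmn L q l g m n) (gmn L q l g' m' n') =
    of_nat (L - 1) ^ (m + n - nat \<bar>int n - int n'\<bar>) *
      (if m \<le> m' then window_pairing L l g g' 0 (m' - m) (m' - m + l)
       else cnj (window_pairing L l g' g 0 (m - m') (m - m' + l)))"
proof -
  have d: "nat \<bar>int n - int n'\<bar> = (if m \<le> m' then m' - m else m - m')"
    using mn by (simp split: if_split) linarith
  show ?thesis
  proof (cases "m \<le> m'")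
    case True
    then show ?thesis
      using linner_gmn[OF g g'] window_pairing_reduce[of m m' l "m + n + l" L g g'] assms d
      by simp
  next
    case False
    then show ?thesis
      using linner_gmn[OF g g'] window_pairing_swap[of L l g g' m m']
        window_pairing_reduce[of m' m l "m + n + l" L g' g] assms d
      by (simp add: add.assoc)
  qed
qed

lemma linner_gmn_degree_one:
  assumes b: "\<beta> \<in> Cperp L q 1" and b': "\<beta>' \<in> Cperp L q 1"
  shows "linner (gmn L q 1 \<beta> m n) (gmn L q 1 \<beta>' m' n') =
    (if m + n = m' + n'
     then of_nat (L - 1) ^ (m + n - nat \<bar>int n - int n'\<bar>) * (-1) ^ nat \<bar>int n - int n'\<bar>
     else 0) * linner \<beta> \<beta>'"
proof -
  have Cl: "\<beta> \<in> Cl L 1" "\<beta>' \<in> Cl L 1" using b b' by (simp_all add: Cperp_def)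
  have d: "nat \<bar>int n - int n'\<bar> = (if m \<le> m' then m' - m else m - m')" if "m + n = m' + n'"
    using that by (simp split: if_split) linarith
  show ?thesis
    using linner_gmn[OF Cl] linner_gmn_offset[OF Cl, of m n m' n' q] d
      window_pairing_offset_degree_one[OF Cl(1) b', of "m' - m"]
      window_pairing_offset_degree_one[OF Cl(2) b, of "m - m'"] linner_cnj_swap[OF Cl]
    by (auto simp: mult.assoc)
qed

lemma linner_gmn_Cperp:
  assumes g: "\<gamma> \<in> Cperp L q l" and g': "\<gamma>' \<in> Cl L l" and "2 \<le> l"
  shows "linner (gmn L q l \<gamma> m n) (gmn L q l \<gamma>' m' n') =
    (if m = m' \<and> n = n' then of_nat (L - 1) ^ (m + n) else 0) * linner \<gamma> \<gamma>'"
proof -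
  obtain l' where l: "l = Suc l'" "0 < l'" using \<open>2 \<le> l\<close> by (cases l) auto
  have Cl: "\<gamma> \<in> Cl L l" using g by (simp add: Cperp_def)
  consider "m + n \<noteq> m' + n'" | "m = m'" "n = n'" | "m < m'" "m + n = m' + n'"
    | "m' < m" "m + n = m' + n'"
    by linarith
  then show ?thesis
  proof cases
    case 1
    then show ?thesis using linner_gmn[OF Cl g'] by auto
  next
    case 2
    then show ?thesis using linner_gmn_offset[OF Cl g', of m n m' n' q] window_pairing_aligned[OF Cl] l
      by simp
  next
    case 3
    then show ?thesis using linner_gmn_offset[OF Cl g', of m n m' n' q]
        window_pairing_offset_Cperp_left[of \<gamma> L q l' "m' - m" \<gamma>'] g l
      by simp
  next
    case 4
    then show ?thesis using linner_gmn_offset[OF Cl g', of m n m' n' q]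
        window_pairing_offset_Cperp_right[of \<gamma> L q l' "m - m'" \<gamma>'] g l
      by simp
  qed
qed

theorem lemma3p4:
  fixes L l :: nat and q :: real
    and \<beta> \<beta>' \<gamma> \<gamma>' :: "nat list \<Rightarrow> complex"
  assumes "L \<ge> 3"
    and "1 / (real L - 1) \<le> q" and "q \<le> 1"
    and "l \<ge> 2"
    and "\<beta> \<in> Cperp L q 1" and "\<beta>' \<in> Cperp L q 1"
    and "\<gamma> \<in> Cperp L q l" and "\<gamma>' \<in> Cl L l"
  shows "\<forall>m n m' n'.
      linner (gmn L q 1 \<beta> m n) (gmn L q 1 \<beta>' m' n') =
        (if m + n = m' + n'
         then of_nat (L - 1) ^ (m + n - nat \<bar>int n - int n'\<bar>) * (-1) ^ nat \<bar>int n - int n'\<bar>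
         else 0) * linner \<beta> \<beta>'
    \<and> linner (gmn L q l \<gamma> m n) (gmn L q l \<gamma>' m' n') =
        (if m = m' \<and> n = n' then of_nat (L - 1) ^ (m + n) else 0) * linner \<gamma> \<gamma>'"
  using linner_gmn_degree_one[OF assms(5,6)] linner_gmn_Cperp[OF assms(7,8,4)] by blast

end
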